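(* Let $X,Y$ be finite abelian groups, let $Q\in M_{X\times Y}(\mathbb T)$ be generic, and put $$\theta_{ic}^{ke}=\frac{Q_{i,e-c}Q_{i-k,e}}{Q_{ie}Q_{i-k,e-c}}\qquad(i,k\in X,\ c,e\in Y).$$ For every $k\in X$ there is a group representation $\pi^k:\Gamma_{X,Y}\to U_{|Y|}$ on $\mathbb C^Y$ (standard basis $(\epsilon_e)_{e\in Y}$) given by $\pi^k(c^{(i)})\epsilon_e=\theta_{ic}^{ke}\epsilon_{e-c}$. Moreover the family $(\pi^k)_{k\in X}$ is projectively faithful: if $t\in\Gamma_{X,Y}$ is such that $\pi^k(t)$ is a scalar matrix for every $k\in X$, then $t=1$.
   Context: Finite abelian groups are written additively. $\Gamma_{X,Y}$ is the quotient of the free product $Y^{*X}$ of $|X|$ copies of $Y$ (the copy of $c\in Y$ in the $i$-th factor is $c^{(i)}$) by the relations $[c_1^{(i_1)}\cdots c_s^{(i_s)},d_1^{(j_1)}\cdots d_s^{(j_s)}]=1$ whenever $\sum_rc_r=\sum_rd_r=0$. Elements $p_1,\dots,p_m\in\mathbb T$ are root independent if $p_1^{r_1}\cdots p_m^{r_m}=1$ with $r_i\in\mathbb Z$ implies $r_1=\dots=r_m=0$. $Q$ is generic if it is dephased ($Q_{0c}=Q_{i0}=1$ for all $i\in X,c\in Y$) and the elements $Q_{ic}$ with $i\neq0,c\neq0$ are root independent. *)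

theory Defs
  imports "HOL-Analysis.Analysis"
begin

text \<open>Words in the generators c^(i) of the free product of |X| copies of Y:
  the pair (i,c) stands for c^(i).  Gamma_{X,Y} is the monoid of such words modulo
  the congruence gamma_eq below (it is a group, since (-c)^(i) inverts c^(i)).\<close>

inductive gamma_eq :: "('x::{finite,ab_group_add} \<times> 'y::{finite,ab_group_add}) list
    \<Rightarrow> ('x \<times> 'y) list \<Rightarrow> bool" where
  refl: "gamma_eq a a"
| sym: "gamma_eq a b \<Longrightarrow> gamma_eq b a"
| trans: "gamma_eq a b \<Longrightarrow> gamma_eq b c \<Longrightarrow> gamma_eq a c"
| app: "gamma_eq a b \<Longrightarrow> gamma_eq c d \<Longrightarrow> gamma_eq (a @ c) (b @ d)"
| unit: "gamma_eq [(i, 0)] []"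
| mult: "gamma_eq [(i, c), (i, d)] [(i, c + d)]"
| comm: "length a = length b \<Longrightarrow> sum_list (map snd a) = 0 \<Longrightarrow> sum_list (map snd b) = 0
         \<Longrightarrow> gamma_eq (a @ b) (b @ a)"

definition on_circle :: "complex \<Rightarrow> bool" where
  "on_circle z \<longleftrightarrow> cmod z = 1"

definition root_independent_on :: "('a \<Rightarrow> complex) \<Rightarrow> 'a set \<Rightarrow> bool" where
  "root_independent_on p S \<longleftrightarrow>
     (\<forall>r :: 'a \<Rightarrow> int. (\<Prod>s\<in>S. p s powi r s) = 1 \<longrightarrow> (\<forall>s\<in>S. r s = 0))"

definition dephased :: "('x::ab_group_add \<Rightarrow> 'y::ab_group_add \<Rightarrow> complex) \<Rightarrow> bool" where
  "dephased Q \<longleftrightarrow> (\<forall>c. Q 0 c = 1) \<and> (\<forall>i. Q i 0 = 1)"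

definition generic :: "('x::ab_group_add \<Rightarrow> 'y::ab_group_add \<Rightarrow> complex) \<Rightarrow> bool" where
  "generic Q \<longleftrightarrow> dephased Q \<and>
     root_independent_on (\<lambda>(i, c). Q i c) {(i, c). i \<noteq> 0 \<and> c \<noteq> 0}"

definition theta :: "('x::ab_group_add \<Rightarrow> 'y::ab_group_add \<Rightarrow> complex)
    \<Rightarrow> 'x \<Rightarrow> 'y \<Rightarrow> 'x \<Rightarrow> 'y \<Rightarrow> complex" where
  "theta Q i c k e = (Q i (e - c) * Q (i - k) e) / (Q i e * Q (i - k) (e - c))"

text \<open>pi^k(c^(i)) eps_e = theta eps_{e-c}: column e has the entry at row e - c.\<close>
definition gen_mat :: "('x::ab_group_add \<Rightarrow> 'y::{finite,ab_group_add} \<Rightarrow> complex)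
    \<Rightarrow> 'x \<Rightarrow> 'x \<Rightarrow> 'y \<Rightarrow> complex ^('y::{finite,ab_group_add}) ^('y::{finite,ab_group_add})" where
  "gen_mat Q k i c = (\<chi> r e. if r = e - c then theta Q i c k e else 0)"

definition word_mat :: "('x::ab_group_add \<Rightarrow> 'y::{finite,ab_group_add} \<Rightarrow> complex)
    \<Rightarrow> 'x \<Rightarrow> ('x \<times> 'y) list \<Rightarrow> complex ^('y::{finite,ab_group_add}) ^('y::{finite,ab_group_add})" where
  "word_mat Q k w = foldr (\<lambda>(i, c) M. gen_mat Q k i c ** M) w (mat 1)"

definition unitary_mat :: "complex ^'n ^'n \<Rightarrow> bool" where
  "unitary_mat A \<longleftrightarrow> A ** (\<chi> i j. cnj (A $ j $ i)) = mat 1"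

end

theory Submission
  imports Defs
begin

text \<open>Each \<open>\<pi>\<^sup>k(w)\<close> is a monomial matrix: it shifts the standard basis by the total degree of
  \<open>w\<close> (the sum of its letters), with coefficients that are products of \<open>\<theta>\<close>'s, and the defining
  relations of \<open>\<Gamma>\<close> preserve both the shift and the coefficients.
  For faithfulness, every word equals in \<open>\<Gamma>\<close> a product of the elements \<open>u(i,c) = c^(i) (-c)^(0)\<close>
  and their inverses, followed by \<open>s^(0)\<close> with \<open>s\<close> the degree; the \<open>u\<close>'s have degree 0 and
  therefore commute. If all \<open>\<pi>\<^sup>k(w)\<close> are scalar, then \<open>s = 0\<close> and the diagonal entries of
  \<open>\<pi>\<^sup>k(\<Prod>\<^sub>p u(p)^n(p))\<close> are Laurent monomials in the \<open>Q i c\<close>; by genericity, constancy of the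
  diagonal becomes a linear system for the exponents \<open>n\<close>. Taking \<open>k = -j\<close> and reading off the
  exponent of \<open>Q j g\<close>, this system forces \<open>n(j,c) = 0\<close> for \<open>j, c \<noteq> 0\<close>, and the remaining
  \<open>u(p)\<close> are trivial.\<close>

definition shift_mat :: "('n::{finite,ab_group_add} \<Rightarrow> 'a::comm_semiring_1) \<Rightarrow> 'n
    \<Rightarrow> 'a ^('n::{finite,ab_group_add}) ^('n::{finite,ab_group_add})" where
  "shift_mat f s = (\<chi> r e. if r = e - s then f e else 0)"

lemma shift_mat_mult:
  "shift_mat f s ** shift_mat g t = shift_mat (\<lambda>e. f (e - t) * g e) (s + t)"
proof -
  have "(\<Sum>m\<in>UNIV. (if r = m - s then f m else 0) * (if m = e - t then g e else 0))
      = (if r = e - (s + t) then f (e - t) * g e else 0)" for r e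
  proof -
    have "(\<Sum>m\<in>UNIV. (if r = m - s then f m else 0) * (if m = e - t then g e else 0))
        = (\<Sum>m\<in>UNIV. if m = e - t then (if r = m - s then f m else 0) * g e else 0)"
      by (rule sum.cong) auto
    then show ?thesis
      by (simp add: diff_diff_eq add.commute)
  qed
  then show ?thesis
    by (simp add: shift_mat_def matrix_matrix_mult_def vec_eq_iff)
qed

lemma unitary_shift_mat:
  assumes "\<And>e. cmod (f e) = 1"
  shows "unitary_mat (shift_mat f s)"
proof -
  have "(\<Sum>e\<in>UNIV. (if r = e - s then f e else 0) * cnj (if t = e - s then f e else 0))
      = (if r = t then 1 else 0)" for r t
  proof -
    have "(\<Sum>e\<in>UNIV. (if r = e - s then f e else 0) * cnj (if t = e - s then f e else 0))
        = (\<Sum>e\<in>UNIV. if e = r + s then (if r = t then f e * cnj (f e) else 0) else 0)"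
      by (rule sum.cong) (auto simp: algebra_simps)
    also have "\<dots> = (if r = t then 1 else 0)"
      using assms[of "r + s"] by (auto simp flip: complex_norm_square)
    finally show ?thesis .
  qed
  then show ?thesis
    by (simp add: unitary_mat_def shift_mat_def vec_eq_iff matrix_matrix_mult_def mat_def)
qed

lemma shift_mat_eq_mat:
  assumes "shift_mat f s = mat z" and "\<And>e. f e \<noteq> 0"
  shows "s = 0" and "f e = z"
proof -
  have entry: "(if r = e - s then f e else 0) = (if r = e then z else 0)" for r e
    using assms(1) by (simp add: shift_mat_def mat_def vec_eq_iff)
  show "s = 0"
    using entry[of "e - s" e] assms(2)[of e] by (auto split: if_splits)
  then show "f e = z"
    using entry[of e e] by simp
qed

abbreviation word_sum :: "('x \<times> 'y::ab_group_add) list \<Rightarrow> 'y" where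
  "word_sum w \<equiv> sum_list (map snd w)"

fun word_coeff :: "('x::ab_group_add \<Rightarrow> 'y::ab_group_add \<Rightarrow> complex) \<Rightarrow> 'x
    \<Rightarrow> ('x \<times> 'y) list \<Rightarrow> 'y \<Rightarrow> complex" where
    "word_coeff Q k [] e = 1"
  | "word_coeff Q k ((i, c) # w) e = theta Q i c k (e - word_sum w) * word_coeff Q k w e"

lemma word_mat_eq_shift_mat:
  fixes Q :: "'x::ab_group_add \<Rightarrow> 'y::{finite,ab_group_add} \<Rightarrow> complex"
  shows "word_mat Q k w = shift_mat (word_coeff Q k w) (word_sum w)"
proof (induction w)
  case Nil
  then show ?case
    by (simp add: word_mat_def shift_mat_def mat_def vec_eq_iff)
next
  case (Cons a w)
  obtain i c where "a = (i, c)"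
    by fastforce
  moreover have "gen_mat Q k i c = shift_mat (theta Q i c k) c"
    by (simp add: gen_mat_def shift_mat_def)
  ultimately show ?case
    using Cons.IH by (simp add: word_mat_def shift_mat_mult)
qed

lemma word_coeff_append:
  "word_coeff Q k (a @ b) e = word_coeff Q k a (e - word_sum b) * word_coeff Q k b e"
  by (induction a arbitrary: e) (auto simp: algebra_simps diff_diff_eq)

lemma norm_word_coeff:
  assumes "\<And>i c. cmod (Q i c) = 1"
  shows "cmod (word_coeff Q k w e) = 1"
  by (induction w arbitrary: e) (auto simp: theta_def norm_mult norm_divide assms)

lemma gamma_eq_imp_word_sum_coeff_eq:
  assumes "\<And>i c. Q i c \<noteq> 0" and "gamma_eq a b"
  shows "word_sum a = word_sum b \<and> word_coeff Q k a = word_coeff Q k b"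
  using assms(2)
proof (induction rule: gamma_eq.induct)
  case (app a b c d)
  then show ?case
    by (auto simp: word_coeff_append fun_eq_iff)
next
  case (mult i c d)
  show ?case
    by (auto simp: fun_eq_iff theta_def assms(1) diff_diff_eq add.commute field_simps)
next
  case (comm a b)
  then show ?case
    by (auto simp: word_coeff_append fun_eq_iff)
qed (auto simp: fun_eq_iff theta_def assms(1))

declare gamma_eq.trans [trans]

lemma gamma_eq_append_left: "gamma_eq a b \<Longrightarrow> gamma_eq (c @ a) (c @ b)"
  using gamma_eq.app gamma_eq.refl by blast

lemma gamma_eq_append_right: "gamma_eq a b \<Longrightarrow> gamma_eq (a @ c) (b @ c)"
  using gamma_eq.app gamma_eq.refl by blast

lemma gamma_eq_replicate_unit: "gamma_eq (replicate n (i, 0)) []"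
  by (induction n) (use gamma_eq.app[OF gamma_eq.unit] gamma_eq.refl in fastforce)+

text \<open>The relation \<open>comm\<close> only applies to words of equal length; pad with trivial letters.\<close>
lemma gamma_eq_commute:
  fixes a b :: "('x::{finite,ab_group_add} \<times> 'y::{finite,ab_group_add}) list"
  assumes "word_sum a = 0" and "word_sum b = 0"
  shows "gamma_eq (a @ b) (b @ a)"
proof -
  define a' where "a' = a @ replicate (length b) (0, 0)"
  define b' where "b' = b @ replicate (length a) (0, 0)"
  have pad: "sum_list (replicate n (0::'y)) = 0" for n
    by (induction n) simp_all
  have a': "gamma_eq a' a" and b': "gamma_eq b' b"
    using gamma_eq_append_left[OF gamma_eq_replicate_unit] unfolding a'_def b'_def by fastforce+
  have "gamma_eq (a @ b) (a' @ b')"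
    using gamma_eq.app[OF a' b'] gamma_eq.sym by blast
  also have "gamma_eq \<dots> (b' @ a')"
    by (rule gamma_eq.comm) (simp_all add: a'_def b'_def assms pad)
  also have "gamma_eq \<dots> (b @ a)"
    by (rule gamma_eq.app[OF b' a'])
  finally show ?thesis .
qed

lemma gamma_eq_inverse_pair: "gamma_eq [(i, c), (i, - c)] []"
  using gamma_eq.mult[of i c "- c"] gamma_eq.unit gamma_eq.trans by fastforce

text \<open>\<open>basis_word (i, c) True\<close> is \<open>u(i,c) = c^(i) (-c)^(0)\<close>, \<open>basis_word (i, c) False\<close> its inverse;
  a list of signed indices stands for the product of the corresponding \<open>u(p)^(\<plusminus>1)\<close>.\<close>

fun basis_word :: "'x::ab_group_add \<times> 'y::ab_group_add \<Rightarrow> bool \<Rightarrow> ('x \<times> 'y) list" where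
  "basis_word (i, c) True = [(i, c), (0, - c)]"
| "basis_word (i, c) False = [(0, c), (i, - c)]"

definition basis_product :: "(('x::ab_group_add \<times> 'y::ab_group_add) \<times> bool) list \<Rightarrow> ('x \<times> 'y) list" where
  "basis_product T = concat (map (\<lambda>(p, b). basis_word p b) T)"

definition basis_exponent :: "('p \<times> bool) list \<Rightarrow> 'p \<Rightarrow> int" where
  "basis_exponent T p = int (count_list T (p, True)) - int (count_list T (p, False))"

lemma word_sum_basis_word [simp]: "word_sum (basis_word p b) = 0"
  by (cases p; cases b) simp_all

lemma word_sum_basis_product [simp]: "word_sum (basis_product T) = 0"
  by (induction T) (auto simp: basis_product_def)

lemma basis_product_simps [simp]:
  "basis_product [] = []"
  "basis_product ((p, b) # T) = basis_word p b @ basis_product T"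
  "basis_product (T @ T') = basis_product T @ basis_product T'"
  by (simp_all add: basis_product_def)

lemma gamma_eq_delete: "gamma_eq m [] \<Longrightarrow> gamma_eq (x @ m @ y) (x @ y)"
  using gamma_eq_append_left[OF gamma_eq_append_right[of m "[]" y]] by simp

lemma gamma_eq_basis_word_inverse:
  fixes p :: "'x::{finite,ab_group_add} \<times> 'y::{finite,ab_group_add}"
  shows "gamma_eq (basis_word p b @ basis_word p (\<not> b)) []"
proof -
  obtain i c where p: "p = (i, c)"
    by fastforce
  have "gamma_eq ([(j, d)] @ [(l, - d), (l, - (- d))] @ [(j, - d)]) []" for j l :: 'x and d :: 'y
  proof -
    have "gamma_eq ([(j, d)] @ [(l, - d), (l, - (- d))] @ [(j, - d)]) ([(j, d)] @ [(j, - d)])"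
      by (rule gamma_eq_delete[OF gamma_eq_inverse_pair])
    also have "gamma_eq \<dots> []"
      using gamma_eq_inverse_pair[of j d] by simp
    finally show ?thesis .
  qed
  from this[where j = i and l = 0 and d = c] this[where j = 0 and l = i and d = c] show ?thesis
    by (cases b) (simp_all add: p)
qed

lemma gamma_eq_basis_word_degenerate:
  assumes "fst p = 0 \<or> snd p = 0"
  shows "gamma_eq (basis_word p b) []"
proof -
  obtain i c where p: "p = (i, c)"
    by fastforce
  show ?thesis
  proof (cases "i = 0")
    case True
    then have "basis_word p b = [(0, c), (0, - c)]"
      by (cases b) (simp_all add: p)
    then show ?thesis
      using gamma_eq_inverse_pair by simp
  next
    case False
    then obtain j l where "basis_word p b = [(j, 0)] @ [(l, 0)]"
      using assms by (cases b) (auto simp: p)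
    then show ?thesis
      using gamma_eq.app[OF gamma_eq.unit gamma_eq.unit] by simp
  qed
qed

lemma gamma_eq_move_letter:
  "gamma_eq [(0, s), (i, c)] (basis_word (i, s) False @ basis_word (i, s + c) True @ [(0, s + c)])"
proof -
  have "gamma_eq [(i, - s), (i, s + c)] [(i, c)]"
    using gamma_eq.mult[of i "- s" "s + c"] by simp
  moreover have "gamma_eq [(0, - (s + c)), (0, s + c)] []"
    using gamma_eq_inverse_pair[of 0 "- (s + c)"] by (simp only: minus_minus)
  ultimately have "gamma_eq ([(0, s)] @ [(i, - s), (i, s + c)] @ [(0, - (s + c)), (0, s + c)])
      ([(0, s)] @ [(i, c)] @ [])"
    by (rule gamma_eq_append_left[OF gamma_eq.app])
  then show ?thesis
    by (simp add: gamma_eq.sym)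
qed

lemma gamma_eq_normal_form: "\<exists>T. gamma_eq w (basis_product T @ [(0, word_sum w)])"
proof (induction w rule: rev_induct)
  case Nil
  have "gamma_eq [] (basis_product [] @ [(0, word_sum [])])"
    using gamma_eq.sym[OF gamma_eq.unit] by simp
  then show ?case ..
next
  case (snoc a w)
  obtain i c where a: "a = (i, c)"
    by fastforce
  obtain T where "gamma_eq w (basis_product T @ [(0, word_sum w)])"
    using snoc.IH by blast
  from gamma_eq_append_right[OF this, of "[a]"]
  have "gamma_eq (w @ [a]) (basis_product T @ [(0, word_sum w), (i, c)])"
    by (simp add: a)
  also have "gamma_eq \<dots> (basis_product (T @ [((i, word_sum w), False), ((i, word_sum w + c), True)])
      @ [(0, word_sum (w @ [a]))])"
    using gamma_eq_append_left[OF gamma_eq_move_letter[of "word_sum w" i c], of "basis_product T"]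
    by (simp add: a)
  finally show ?case ..
qed

lemma basis_exponent_Cons:
  "basis_exponent ((q, b) # T) p = basis_exponent T p + (if q = p then (if b then 1 else - 1) else 0)"
  by (cases b) (auto simp: basis_exponent_def)

lemma gamma_eq_basis_product_cancel:
  fixes p :: "'x::{finite,ab_group_add} \<times> 'y::{finite,ab_group_add}"
  shows "gamma_eq (basis_product ((p, b) # A @ (p, \<not> b) # B)) (basis_product (A @ B))"
proof -
  have "gamma_eq (basis_product ((p, b) # A @ (p, \<not> b) # B))
      (basis_product A @ (basis_word p b @ basis_word p (\<not> b)) @ basis_product B)"
    using gamma_eq_append_right[OF gamma_eq_commute[of "basis_word p b" "basis_product A"]] by simp
  also have "gamma_eq \<dots> (basis_product (A @ B))"
    using gamma_eq_delete[OF gamma_eq_basis_word_inverse] by simp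
  finally show ?thesis .
qed

lemma gamma_eq_basis_product_trivial:
  fixes T :: "(('x::{finite,ab_group_add} \<times> 'y::{finite,ab_group_add}) \<times> bool) list"
  assumes "\<And>i c. i \<noteq> 0 \<Longrightarrow> c \<noteq> 0 \<Longrightarrow> basis_exponent T (i, c) = 0"
  shows "gamma_eq (basis_product T) []"
  using assms
proof (induction "length T" arbitrary: T rule: less_induct)
  case less
  show ?case
  proof (cases T)
    case Nil
    then show ?thesis
      by (simp add: gamma_eq.refl)
  next
    case (Cons t T')
    obtain p b where T: "T = (p, b) # T'"
      using Cons by fastforce
    show ?thesis
    proof (cases "fst p = 0 \<or> snd p = 0")
      case True
      have "basis_exponent T' (i, c) = 0" if "i \<noteq> 0" "c \<noteq> 0" for i c
        using less.prems[OF that] True that by (cases p) (auto simp: T basis_exponent_Cons)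
      then have "gamma_eq (basis_product T') []"
        using less.hyps[of T'] by (simp add: T)
      then show ?thesis
        using gamma_eq.app[OF gamma_eq_basis_word_degenerate[OF True]] by (simp add: T)
    next
      case False
      then have "count_list T' (p, \<not> b) \<noteq> 0"
        using less.prems[of "fst p" "snd p"] by (cases b) (auto simp: T basis_exponent_def)
      then obtain A B where T': "T' = A @ (p, \<not> b) # B"
        by (metis count_list_0_iff split_list)
      have "basis_exponent (A @ B) q = basis_exponent T q" for q
        by (cases b) (simp_all add: T T' basis_exponent_def)
      then have "gamma_eq (basis_product (A @ B)) []"
        using less.hyps[of "A @ B"] less.prems by (simp add: T T')
      with gamma_eq_basis_product_cancel show ?thesis
        unfolding T T' by (rule gamma_eq.trans)
    qed
  qed
qed

definition laurent_monomial :: "('a::finite \<Rightarrow> 'b::field) \<Rightarrow> ('a \<Rightarrow> int) \<Rightarrow> 'b" where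
  "laurent_monomial q r = (\<Prod>s\<in>UNIV. q s powi r s)"

lemma laurent_monomial_zero [simp]: "laurent_monomial q (\<lambda>s. 0) = 1"
  by (simp add: laurent_monomial_def)

context
  fixes q :: "'a::finite \<Rightarrow> 'b::field"
  assumes nonzero: "\<And>s. q s \<noteq> 0"
begin

lemma laurent_monomial_add:
  "laurent_monomial q (\<lambda>s. r s + r' s) = laurent_monomial q r * laurent_monomial q r'"
  by (simp add: laurent_monomial_def power_int_add nonzero prod.distrib)

lemma laurent_monomial_diff:
  "laurent_monomial q (\<lambda>s. r s - r' s) = laurent_monomial q r / laurent_monomial q r'"
  by (simp add: laurent_monomial_def power_int_diff nonzero prod_dividef)

lemma laurent_monomial_uminus:
  "laurent_monomial q (\<lambda>s. - r s) = inverse (laurent_monomial q r)"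
  using prod_inversef[of "\<lambda>s. q s powi r s" UNIV]
  by (simp add: laurent_monomial_def power_int_minus o_def)

lemma laurent_monomial_indicator: "laurent_monomial q (\<lambda>s. of_bool (s = x)) = q x"
proof -
  have "laurent_monomial q (\<lambda>s. of_bool (s = x)) = (\<Prod>s\<in>UNIV. if s = x then q x else 1)"
    unfolding laurent_monomial_def by (rule prod.cong) auto
  then show ?thesis
    by simp
qed

end

lemma generic_laurent_monomial_eq:
  fixes Q :: "'x::{finite,ab_group_add} \<Rightarrow> 'y::{finite,ab_group_add} \<Rightarrow> complex"
  assumes gen: "generic Q" and nonzero: "\<And>i c. Q i c \<noteq> 0"
    and eq: "laurent_monomial (\<lambda>(i, c). Q i c) r = laurent_monomial (\<lambda>(i, c). Q i c) r'"
    and "i \<noteq> 0" and "c \<noteq> 0"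
  shows "r (i, c) = r' (i, c)"
proof -
  define q where "q = (\<lambda>(i, c). Q i c)"
  define S where "S = {(i :: 'x, c :: 'y). i \<noteq> 0 \<and> c \<noteq> 0}"
  have q_nonzero: "q s \<noteq> 0" for s
    using nonzero by (cases s) (simp add: q_def)
  have "laurent_monomial q r' \<noteq> 0"
    by (simp add: laurent_monomial_def q_nonzero power_int_not_zero)
  then have "1 = laurent_monomial q (\<lambda>s. r s - r' s)"
    using eq unfolding q_def[symmetric] by (simp add: laurent_monomial_diff[OF q_nonzero])
  also have "\<dots> = (\<Prod>s\<in>S. q s powi (r s - r' s))"
    unfolding laurent_monomial_def
    using gen by (intro prod.mono_neutral_right) (auto simp: generic_def dephased_def q_def S_def)
  finally have "(\<Prod>s\<in>S. q s powi (r s - r' s)) = 1" ..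
  moreover have "root_independent_on q S"
    using gen by (simp add: generic_def q_def S_def)
  moreover have "(i, c) \<in> S"
    using assms(4,5) by (simp add: S_def)
  ultimately show ?thesis
    unfolding root_independent_on_def by (metis eq_iff_diff_eq_0)
qed

fun basis_word_exponent :: "'x::ab_group_add \<Rightarrow> 'x \<times> 'y::ab_group_add \<Rightarrow> 'y \<Rightarrow> 'x \<times> 'y \<Rightarrow> int" where
  "basis_word_exponent k (i, c) e s =
     of_bool (s = (0, e + c)) + of_bool (s = (- k, e)) + of_bool (s = (i, e)) + of_bool (s = (i - k, e + c))
     - of_bool (s = (0, e)) - of_bool (s = (- k, e + c)) - of_bool (s = (i, e + c)) - of_bool (s = (i - k, e))"

lemma word_coeff_basis_word:
  assumes nonzero: "\<And>i c. Q i c \<noteq> 0"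
  shows "word_coeff Q k (basis_word p b) e
    = laurent_monomial (\<lambda>(i, c). Q i c) (\<lambda>s. (if b then 1 else - 1) * basis_word_exponent k p e s)"
proof -
  have q_nonzero: "(\<lambda>(i, c). Q i c) s \<noteq> 0" for s
    using nonzero by (cases s) simp
  obtain i c where p: "p = (i, c)"
    by fastforce
  note laurent = laurent_monomial_add[OF q_nonzero] laurent_monomial_diff[OF q_nonzero]
    laurent_monomial_uminus[OF q_nonzero] laurent_monomial_indicator[OF q_nonzero]
  show ?thesis
    by (cases b) (simp_all add: p laurent theta_def nonzero field_simps)
qed

lemma word_coeff_basis_product:
  fixes Q :: "'x::{finite,ab_group_add} \<Rightarrow> 'y::{finite,ab_group_add} \<Rightarrow> complex"
  assumes nonzero: "\<And>i c. Q i c \<noteq> 0"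
  shows "word_coeff Q k (basis_product T) e
    = laurent_monomial (\<lambda>(i, c). Q i c) (\<lambda>s. \<Sum>p\<in>UNIV. basis_exponent T p * basis_word_exponent k p e s)"
proof (induction T)
  case Nil
  then show ?case
    by (simp add: basis_exponent_def)
next
  case (Cons t T)
  obtain p b where t: "t = (p, b)"
    by fastforce
  have q_nonzero: "(\<lambda>(i, c). Q i c) s \<noteq> 0" for s
    using nonzero by (cases s) simp
  have "(\<Sum>p'\<in>UNIV. basis_exponent (t # T) p' * basis_word_exponent k p' e s)
      = (\<Sum>p'\<in>UNIV. basis_exponent T p' * basis_word_exponent k p' e s)
        + (if b then 1 else - 1) * basis_word_exponent k p e s" for s
    by (simp add: t basis_exponent_Cons distrib_right sum.distrib if_distrib[of "\<lambda>x. x * _"]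
        cong: if_cong)
  then show ?case
    using Cons.IH
    by (simp add: t word_coeff_append word_coeff_basis_word[OF nonzero] laurent_monomial_add[OF q_nonzero])
qed

lemma sum_opposite_weights:
  fixes v :: "'a::{finite,zero} \<Rightarrow> 'b::comm_ring_1"
  shows "(\<Sum>i\<in>UNIV. (1 + of_bool (i = j) - of_bool (i = 0)) * v i) = sum v UNIV + v j - v 0"
proof -
  have "(\<Sum>i\<in>UNIV. (1 + of_bool (i = j) - of_bool (i = 0)) * v i)
      = (\<Sum>i\<in>UNIV. v i + (if i = j then v i else 0) - (if i = 0 then v i else 0))"
    by (rule sum.cong) auto
  then show ?thesis
    by (simp add: sum.distrib sum_subtractf)
qed

lemma eq_zero_if_sum_add_diff_eq_zero:
  fixes v :: "'a::{finite,zero} \<Rightarrow> 'b::{idom,ring_char_0}"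
  assumes "\<And>j. j \<noteq> 0 \<Longrightarrow> sum v UNIV + v j - v 0 = 0" and "j \<noteq> 0"
  shows "v j = 0"
proof -
  let ?S = "sum v UNIV" and ?n = "of_nat (card (UNIV :: 'a set)) :: 'b"
  have "?S = v 0 + (\<Sum>i\<in>UNIV - {0}. v i)"
    by (simp add: sum.remove)
  also have "(\<Sum>i\<in>UNIV - {0}. v i) = (\<Sum>i :: 'a\<in>UNIV - {0}. v 0 - ?S)"
  proof (rule sum.cong)
    show "v i = v 0 - ?S" if "i \<in> UNIV - {0}" for i
      using assms(1)[of i] that by (simp add: diff_eq_eq eq_diff_eq add.commute)
  qed simp
  also have "\<dots> = (?n - 1) * (v 0 - ?S)"
    using finite_UNIV_card_ge_0[where 'a = 'a] by (simp add: card_Diff_singleton of_nat_diff)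
  finally have "?n * (?S - v 0) = 0"
    by (simp add: algebra_simps)
  then have "?S = v 0"
    by simp
  then show ?thesis
    using assms by simp
qed

lemma eq_zero_if_constant_sum_eq_zero:
  fixes F :: "'a::finite \<Rightarrow> 'b::{idom,ring_char_0}"
  assumes "\<And>x. F x = F y" and "sum F UNIV = 0"
  shows "F x = 0"
proof -
  have "sum F UNIV = sum (\<lambda>_ :: 'a. F y) UNIV"
    using assms(1) by (intro sum.cong) simp_all
  then have "sum F UNIV = of_nat (card (UNIV :: 'a set)) * F y"
    by simp
  then show ?thesis
    using assms by simp
qed

lemma basis_word_exponent_opposite:
  fixes i j :: "'x::ab_group_add" and c e g :: "'y::ab_group_add"
  assumes "j \<noteq> 0"
  shows "basis_word_exponent (- j) (i, c) e (j, g)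
    = (1 + of_bool (i = j) - of_bool (i = 0)) * (of_bool (g - e = 0) - of_bool (g - e = c))"
proof -
  have "i - - j = j \<longleftrightarrow> i = 0" and "g - e = c \<longleftrightarrow> g = e + c"
    by (auto simp: algebra_simps)
  then show ?thesis
    using assms by (auto simp: algebra_simps)
qed

lemma sum_basis_word_exponent_opposite:
  fixes n :: "'x::{finite,ab_group_add} \<times> 'y::{finite,ab_group_add} \<Rightarrow> int"
  assumes "j \<noteq> 0"
  shows "(\<Sum>p\<in>UNIV. n p * basis_word_exponent (- j) p e (j, g))
    = (\<Sum>i\<in>UNIV. (1 + of_bool (i = j) - of_bool (i = 0))
        * (of_bool (g - e = 0) * (\<Sum>d\<in>UNIV. n (i, d)) - n (i, g - e)))"
proof -
  have row: "(\<Sum>d\<in>UNIV. n (i, d) * (of_bool (f = 0) - of_bool (f = d)))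
      = of_bool (f = 0) * (\<Sum>d\<in>UNIV. n (i, d)) - n (i, f)" for i f
  proof -
    have "(\<Sum>d\<in>UNIV. n (i, d) * of_bool (f = d)) = (\<Sum>d\<in>UNIV. if d = f then n (i, d) else 0)"
      by (rule sum.cong) auto
    then show ?thesis
      by (simp add: right_diff_distrib sum_subtractf sum_distrib_right mult.commute)
  qed
  have "(\<Sum>p\<in>UNIV. n p * basis_word_exponent (- j) p e (j, g))
      = (\<Sum>i\<in>UNIV. \<Sum>d\<in>UNIV. n (i, d) * basis_word_exponent (- j) (i, d) e (j, g))"
    unfolding UNIV_Times_UNIV[symmetric] sum.cartesian_product
    by (simp add: case_prod_beta del: basis_word_exponent.simps)
  also have "\<dots> = (\<Sum>i\<in>UNIV. (1 + of_bool (i = j) - of_bool (i = 0))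
      * (\<Sum>d\<in>UNIV. n (i, d) * (of_bool (g - e = 0) - of_bool (g - e = d))))"
    by (simp add: basis_word_exponent_opposite[OF assms] sum_distrib_left mult_ac
        del: basis_word_exponent.simps)
  finally show ?thesis
    unfolding row .
qed

text \<open>With \<open>G i f = [f = 0] * (\<Sum>d. n(i,d)) - n(i,f)\<close>, the hypothesis says that
  \<open>H j = (\<Sum>i. G i) + G j - G 0\<close> is constant; its values sum to zero, so it vanishes, and this
  forces \<open>G j = 0\<close> for \<open>j \<noteq> 0\<close>.\<close>

lemma exponent_eq_zero_if_diagonal_constant:
  fixes n :: "'x::{finite,ab_group_add} \<times> 'y::{finite,ab_group_add} \<Rightarrow> int"
  assumes const: "\<And>j g e. j \<noteq> 0 \<Longrightarrow> g \<noteq> 0 \<Longrightarrow>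
      (\<Sum>p\<in>UNIV. n p * basis_word_exponent (- j) p e (j, g))
      = (\<Sum>p\<in>UNIV. n p * basis_word_exponent (- j) p 0 (j, g))"
    and "j \<noteq> 0" and "c \<noteq> 0"
  shows "n (j, c) = 0"
proof -
  define G where "G i f = of_bool (f = 0) * (\<Sum>d\<in>UNIV. n (i, d)) - n (i, f)" for i f
  define H where "H j f = (\<Sum>i\<in>UNIV. G i f) + G j f - G 0 f" for j f
  have H_eq: "(\<Sum>p\<in>UNIV. n p * basis_word_exponent (- j) p e (j, g)) = H j (g - e)"
    if "j \<noteq> 0" for j g e
    unfolding sum_basis_word_exponent_opposite[OF that] G_def[symmetric] sum_opposite_weights H_def ..
  have H_zero: "H j f = 0" if "j \<noteq> 0" for j f
  proof (rule eq_zero_if_constant_sum_eq_zero)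
    show "H j f = H j c" for f
      using const[OF that \<open>c \<noteq> 0\<close>, of "c - f"] by (simp add: H_eq that)
    have "(\<Sum>f\<in>UNIV. G i f) = 0" for i
      by (simp add: G_def sum_subtractf flip: sum_distrib_right)
    then show "(\<Sum>f\<in>UNIV. H j f) = 0"
      by (simp add: H_def sum.distrib sum_subtractf sum.swap[of _ UNIV UNIV])
  qed
  have "G j c = 0"
    using H_zero \<open>j \<noteq> 0\<close> by (intro eq_zero_if_sum_add_diff_eq_zero[of "\<lambda>i. G i c"]) (simp_all add: H_def)
  then show ?thesis
    using \<open>c \<noteq> 0\<close> by (simp add: G_def)
qed

lemma basis_exponent_eq_zero_if_coeff_constant:
  fixes Q :: "'x::{finite,ab_group_add} \<Rightarrow> 'y::{finite,ab_group_add} \<Rightarrow> complex"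
  assumes gen: "generic Q" and nonzero: "\<And>i c. Q i c \<noteq> 0"
    and const: "\<And>k e. word_coeff Q k (basis_product T) e = word_coeff Q k (basis_product T) 0"
    and "i \<noteq> 0" and "c \<noteq> 0"
  shows "basis_exponent T (i, c) = 0"
proof (rule exponent_eq_zero_if_diagonal_constant[OF _ assms(4,5)])
  fix j :: 'x and g e :: 'y
  assume "j \<noteq> 0" and "g \<noteq> 0"
  define R where "R e = (\<lambda>s. \<Sum>p\<in>UNIV. basis_exponent T p * basis_word_exponent (- j) p e s)" for e
  have "laurent_monomial (\<lambda>(i, c). Q i c) (R e) = laurent_monomial (\<lambda>(i, c). Q i c) (R 0)"
    using const[of "- j" e] by (simp add: word_coeff_basis_product[OF nonzero] R_def)
  from generic_laurent_monomial_eq[OF gen nonzero this \<open>j \<noteq> 0\<close> \<open>g \<noteq> 0\<close>]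
  show "(\<Sum>p\<in>UNIV. basis_exponent T p * basis_word_exponent (- j) p e (j, g))
      = (\<Sum>p\<in>UNIV. basis_exponent T p * basis_word_exponent (- j) p 0 (j, g))"
    by (simp add: R_def)
qed

lemma word_mat_eq_if_gamma_eq:
  fixes Q :: "'x::{finite,ab_group_add} \<Rightarrow> 'y::{finite,ab_group_add} \<Rightarrow> complex"
  assumes "\<And>i c. Q i c \<noteq> 0" and "gamma_eq w v"
  shows "word_mat Q k w = word_mat Q k v"
  using gamma_eq_imp_word_sum_coeff_eq[OF assms] by (simp add: word_mat_eq_shift_mat)

lemma unitary_word_mat:
  fixes Q :: "'x::ab_group_add \<Rightarrow> 'y::{finite,ab_group_add} \<Rightarrow> complex"
  assumes "\<And>i c. cmod (Q i c) = 1"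
  shows "unitary_mat (word_mat Q k w)"
  by (simp add: word_mat_eq_shift_mat unitary_shift_mat norm_word_coeff assms)

lemma gamma_eq_Nil_if_word_mat_scalar:
  fixes Q :: "'x::{finite,ab_group_add} \<Rightarrow> 'y::{finite,ab_group_add} \<Rightarrow> complex"
  assumes unit: "\<And>i c. cmod (Q i c) = 1" and gen: "generic Q"
    and scalar: "\<And>k. \<exists>z. word_mat Q k w = mat z"
  shows "gamma_eq w []"
proof -
  have nonzero: "Q i c \<noteq> 0" for i c
    using unit[of i c] by auto
  have diagonal: "word_sum w = 0 \<and> word_coeff Q k w e = word_coeff Q k w 0" for k e
  proof -
    obtain z where "shift_mat (word_coeff Q k w) (word_sum w) = mat z"
      using scalar by (auto simp: word_mat_eq_shift_mat)
    moreover have "word_coeff Q k w e \<noteq> 0" for e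
      using norm_word_coeff[of Q k w e] unit by auto
    ultimately show ?thesis
      using shift_mat_eq_mat by metis
  qed
  obtain T where "gamma_eq w (basis_product T @ [(0, word_sum w)])"
    using gamma_eq_normal_form by blast
  also have "gamma_eq \<dots> (basis_product T @ [])"
    using gamma_eq_append_left[OF gamma_eq.unit] diagonal by simp
  finally have w_T: "gamma_eq w (basis_product T)"
    by simp
  have "word_coeff Q k (basis_product T) e = word_coeff Q k (basis_product T) 0" for k e
    using diagonal gamma_eq_imp_word_sum_coeff_eq[OF nonzero w_T] by simp
  then have "gamma_eq (basis_product T) []"
    by (intro gamma_eq_basis_product_trivial basis_exponent_eq_zero_if_coeff_constant[OF gen nonzero])
  with w_T show ?thesis
    by (rule gamma_eq.trans)
qed

theorem lemma4p4:
  fixes Q :: "'x::{finite,ab_group_add} \<Rightarrow> 'y::{finite,ab_group_add} \<Rightarrow> complex"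
  assumes circle: "\<forall>i c. on_circle (Q i c)"
    and gen: "generic Q"
  shows "(\<forall>k. (\<forall>w v. gamma_eq w v \<longrightarrow> word_mat Q k w = word_mat Q k v)
              \<and> (\<forall>w. unitary_mat (word_mat Q k w)))
         \<and> (\<forall>w. (\<forall>k. \<exists>z. word_mat Q k w = mat z) \<longrightarrow> gamma_eq w [])"
proof -
  have unit: "\<And>i c. cmod (Q i c) = 1"
    using circle by (simp add: on_circle_def)
  then have nonzero: "\<And>i c. Q i c \<noteq> 0"
    by (metis norm_zero zero_neq_one)
  show ?thesis
    using word_mat_eq_if_gamma_eq[where Q = Q, OF nonzero] unitary_word_mat[where Q = Q, OF unit]
      gamma_eq_Nil_if_word_mat_scalar[where Q = Q, OF unit gen] by blast
qed

end
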